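(* Let $(C;\le_0,\le_1)$ be a compatible 2-preorder and let $\mathcal C_i$ ($i=0,1$) be the family of $\le_i$-up subsets of $C$. Then any two disjoint sets $A,B\subseteq C$ whose complements belong to $\mathcal C_1$ can be separated by a set $D\in\mathcal C_1$ whose complement is also in $\mathcal C_1$ (i.e., $A\subseteq D\subseteq C\setminus B$). If moreover $C$ is finite, then any two such disjoint sets can be separated by a set in the Boolean closure of $\mathcal C_0$ (the 2-base $(\mathcal C_0,\mathcal C_1)$ is interpolable).
   Context: A 2-preorder is a set $C$ with preorders $\le_0,\le_1$ such that $x\le_1y$ implies $x\equiv_0y$. It is compatible if $a\equiv_0b$ implies that there is $c$ with $c\le_1a$ and $c\le_1b$. A set $U$ is $\le_i$-up if $a\in U$ and $a\le_i c$ imply $c\in U$. *)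

theory Defs
  imports Main
begin

definition preorder_on_set :: "'a set \<Rightarrow> ('a \<Rightarrow> 'a \<Rightarrow> bool) \<Rightarrow> bool" where
  "preorder_on_set C r \<longleftrightarrow> (\<forall>x\<in>C. r x x) \<and>
     (\<forall>x\<in>C. \<forall>y\<in>C. \<forall>z\<in>C. r x y \<and> r y z \<longrightarrow> r x z)"

definition two_preorder :: "'a set \<Rightarrow> ('a \<Rightarrow> 'a \<Rightarrow> bool) \<Rightarrow> ('a \<Rightarrow> 'a \<Rightarrow> bool) \<Rightarrow> bool" where
  "two_preorder C le0 le1 \<longleftrightarrow> preorder_on_set C le0 \<and> preorder_on_set C le1 \<and>
     (\<forall>x\<in>C. \<forall>y\<in>C. le1 x y \<longrightarrow> le0 x y \<and> le0 y x)"

definition compatible_two_preorder :: "'a set \<Rightarrow> ('a \<Rightarrow> 'a \<Rightarrow> bool) \<Rightarrow> ('a \<Rightarrow> 'a \<Rightarrow> bool) \<Rightarrow> bool" where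
  "compatible_two_preorder C le0 le1 \<longleftrightarrow> two_preorder C le0 le1 \<and>
     (\<forall>a\<in>C. \<forall>b\<in>C. le0 a b \<and> le0 b a \<longrightarrow> (\<exists>c\<in>C. le1 c a \<and> le1 c b))"

definition up_sets :: "'a set \<Rightarrow> ('a \<Rightarrow> 'a \<Rightarrow> bool) \<Rightarrow> 'a set set" where
  "up_sets C r = {U. U \<subseteq> C \<and> (\<forall>a\<in>U. \<forall>c\<in>C. r a c \<longrightarrow> c \<in> U)}"

inductive_set bool_closure :: "'a set \<Rightarrow> 'a set set \<Rightarrow> 'a set set" for C F where
  base: "U \<in> F \<Longrightarrow> U \<in> bool_closure C F"
| empty: "{} \<in> bool_closure C F"
| compl: "U \<in> bool_closure C F \<Longrightarrow> C - U \<in> bool_closure C F"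
| union: "U \<in> bool_closure C F \<Longrightarrow> V \<in> bool_closure C F \<Longrightarrow> U \<union> V \<in> bool_closure C F"
| inter: "U \<in> bool_closure C F \<Longrightarrow> V \<in> bool_closure C F \<Longrightarrow> U \<inter> V \<in> bool_closure C F"

end

theory Submission
  imports Defs
begin

text \<open>
  The \<open>\<le>\<^sub>1\<close>-up closure \<open>D\<close> of \<open>A\<close> separates \<open>A\<close> from \<open>B\<close>, and its complement is
  \<open>\<le>\<^sub>1\<close>-up as well: if \<open>c \<le>\<^sub>1 y\<close> with \<open>c \<in> A\<close> and \<open>x \<le>\<^sub>1 y\<close>, then \<open>x \<equiv>\<^sub>0 c\<close>, so by
  compatibility some \<open>f\<close> lies \<open>\<le>\<^sub>1\<close>-below both, \<open>f \<in> A\<close> because \<open>A\<close> is \<open>\<le>\<^sub>1\<close>-down, and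
  hence \<open>x \<in> D\<close>. A set that is \<open>\<le>\<^sub>1\<close>-up together with its complement is, by the same
  compatibility argument, a union of \<open>\<equiv>\<^sub>0\<close>-classes; each class is the intersection of a
  \<open>\<le>\<^sub>0\<close>-up set with the complement of another, so for finite \<open>C\<close> the union lies in the
  Boolean closure of the \<open>\<le>\<^sub>0\<close>-up sets.
\<close>

lemma preorder_on_set_refl: "preorder_on_set C r \<Longrightarrow> x \<in> C \<Longrightarrow> r x x"
  unfolding preorder_on_set_def by blast

lemma preorder_on_set_trans:
  "preorder_on_set C r \<Longrightarrow> x \<in> C \<Longrightarrow> y \<in> C \<Longrightarrow> z \<in> C \<Longrightarrow> r x y \<Longrightarrow> r y z \<Longrightarrow> r x z"
  unfolding preorder_on_set_def by blast

lemma compl_in_up_sets_iff: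
  assumes "A \<subseteq> C"
  shows "C - A \<in> up_sets C r \<longleftrightarrow> (\<forall>a\<in>A. \<forall>x\<in>C. r x a \<longrightarrow> x \<in> A)"
  using assms unfolding up_sets_def by blast

definition up_closure :: "'a set \<Rightarrow> ('a \<Rightarrow> 'a \<Rightarrow> bool) \<Rightarrow> 'a set \<Rightarrow> 'a set" where
  "up_closure C r A = {x \<in> C. \<exists>a\<in>A. r a x}"

lemma up_closure_in_up_sets:
  assumes "preorder_on_set C r" "A \<subseteq> C"
  shows "up_closure C r A \<in> up_sets C r"
  using assms preorder_on_set_trans[OF assms(1)]
  unfolding up_closure_def up_sets_def by blast

lemma subset_up_closure:
  assumes "preorder_on_set C r" "A \<subseteq> C"
  shows "A \<subseteq> up_closure C r A"
  using assms preorder_on_set_refl[OF assms(1)] unfolding up_closure_def by blast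

lemma up_closure_disjoint:
  assumes "B \<subseteq> C" "C - B \<in> up_sets C r" "A \<subseteq> C" "A \<inter> B = {}"
  shows "up_closure C r A \<inter> B = {}"
  using assms compl_in_up_sets_iff[OF assms(1)] unfolding up_closure_def by blast

lemma compl_up_closure_in_up_sets:
  assumes cp: "compatible_two_preorder C le0 le1"
    and A: "A \<subseteq> C" "C - A \<in> up_sets C le1"
  shows "C - up_closure C le1 A \<in> up_sets C le1"
proof -
  have pre0: "preorder_on_set C le0"
    and equiv0: "\<And>x y. x \<in> C \<Longrightarrow> y \<in> C \<Longrightarrow> le1 x y \<Longrightarrow> le0 x y \<and> le0 y x"
    and compat: "\<And>a b. a \<in> C \<Longrightarrow> b \<in> C \<Longrightarrow> le0 a b \<Longrightarrow> le0 b a \<Longrightarrow> \<exists>c\<in>C. le1 c a \<and> le1 c b"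
    using cp unfolding compatible_two_preorder_def two_preorder_def by blast+
  have A_down: "\<And>a x. a \<in> A \<Longrightarrow> x \<in> C \<Longrightarrow> le1 x a \<Longrightarrow> x \<in> A"
    using A compl_in_up_sets_iff by blast
  have "x \<in> up_closure C le1 A"
    if x: "x \<in> C" and y: "y \<in> up_closure C le1 A" "le1 x y" for x y
  proof -
    obtain c where c: "c \<in> A" "le1 c y" and yC: "y \<in> C"
      using y unfolding up_closure_def by blast
    have cC: "c \<in> C" using c A by blast
    have "le0 c x" "le0 x c"
      using equiv0[OF cC yC c(2)] equiv0[OF x yC y(2)]
        preorder_on_set_trans[OF pre0] x yC cC by blast+
    then obtain f where f: "f \<in> C" "le1 f c" "le1 f x"
      using compat cC x by blast
    have "f \<in> A" using A_down c f by blast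
    then show ?thesis using f x unfolding up_closure_def by blast
  qed
  then show ?thesis unfolding up_sets_def by blast
qed

theorem compatible_two_preorder_separation:
  assumes cp: "compatible_two_preorder C le0 le1"
    and AB: "A \<subseteq> C" "B \<subseteq> C" "A \<inter> B = {}"
    and up: "C - A \<in> up_sets C le1" "C - B \<in> up_sets C le1"
  shows "\<exists>D\<in>up_sets C le1. C - D \<in> up_sets C le1 \<and> A \<subseteq> D \<and> D \<subseteq> C - B"
proof -
  have pre1: "preorder_on_set C le1"
    using cp unfolding compatible_two_preorder_def two_preorder_def by blast
  let ?D = "up_closure C le1 A"
  have "?D \<in> up_sets C le1" using up_closure_in_up_sets[OF pre1 AB(1)] .
  moreover have "C - ?D \<in> up_sets C le1"
    using compl_up_closure_in_up_sets[OF cp AB(1) up(1)] .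
  moreover have "A \<subseteq> ?D" using subset_up_closure[OF pre1 AB(1)] .
  moreover have "?D \<subseteq> C - B"
    using up_closure_disjoint[OF AB(2) up(2) AB(1) AB(3)] unfolding up_closure_def by blast
  ultimately show ?thesis by blast
qed

lemma up_sets_with_compl_saturated:
  assumes cp: "compatible_two_preorder C le0 le1"
    and D: "D \<in> up_sets C le1" "C - D \<in> up_sets C le1"
    and xz: "x \<in> D" "z \<in> C" "le0 x z" "le0 z x"
  shows "z \<in> D"
proof -
  have "x \<in> C" using D(1) xz(1) unfolding up_sets_def by blast
  then obtain e where e: "e \<in> C" "le1 e x" "le1 e z"
    using cp xz(2-4) unfolding compatible_two_preorder_def by blast
  have "e \<in> D"
  proof (rule ccontr)
    assume "e \<notin> D"
    then have "x \<in> C - D" using D(2) e \<open>x \<in> C\<close> unfolding up_sets_def by blast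
    then show False using xz(1) by blast
  qed
  then show ?thesis using D(1) e xz(2) unfolding up_sets_def by blast
qed

lemma equiv_class_in_bool_closure:
  assumes "preorder_on_set C r" "x \<in> C"
  shows "{z \<in> C. r x z \<and> r z x} \<in> bool_closure C (up_sets C r)"
proof -
  have "{z \<in> C. r x z} \<in> up_sets C r" "{z \<in> C. \<not> r z x} \<in> up_sets C r"
    using assms preorder_on_set_trans[OF assms(1)] unfolding up_sets_def by blast+
  then have "{z \<in> C. r x z} \<inter> (C - {z \<in> C. \<not> r z x}) \<in> bool_closure C (up_sets C r)"
    by (intro bool_closure.inter bool_closure.compl bool_closure.base)
  moreover have "{z \<in> C. r x z} \<inter> (C - {z \<in> C. \<not> r z x}) = {z \<in> C. r x z \<and> r z x}"
    by blast
  ultimately show ?thesis by simp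
qed

lemma bool_closure_UN:
  assumes "finite S" "\<And>x. x \<in> S \<Longrightarrow> f x \<in> bool_closure C F"
  shows "(\<Union>x\<in>S. f x) \<in> bool_closure C F"
  using assms
  by (induction S rule: finite_induct) (auto intro: bool_closure.empty bool_closure.union)

lemma saturated_in_bool_closure:
  assumes pre: "preorder_on_set C r" and "finite C" "D \<subseteq> C"
    and sat: "\<And>x z. x \<in> D \<Longrightarrow> z \<in> C \<Longrightarrow> r x z \<Longrightarrow> r z x \<Longrightarrow> z \<in> D"
  shows "D \<in> bool_closure C (up_sets C r)"
proof -
  have "D = (\<Union>x\<in>D. {z \<in> C. r x z \<and> r z x})"
    using \<open>D \<subseteq> C\<close> sat preorder_on_set_refl[OF pre] by blast
  also have "\<dots> \<in> bool_closure C (up_sets C r)"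
    using assms finite_subset equiv_class_in_bool_closure[OF pre]
    by (intro bool_closure_UN) blast+
  finally show ?thesis .
qed

theorem lemma3p5:
  fixes C :: "'a set" and le0 le1 :: "'a \<Rightarrow> 'a \<Rightarrow> bool"
  assumes "compatible_two_preorder C le0 le1"
  shows "(\<forall>A B. A \<subseteq> C \<and> B \<subseteq> C \<and> A \<inter> B = {} \<and>
            C - A \<in> up_sets C le1 \<and> C - B \<in> up_sets C le1 \<longrightarrow>
            (\<exists>D\<in>up_sets C le1. C - D \<in> up_sets C le1 \<and> A \<subseteq> D \<and> D \<subseteq> C - B))
       \<and> (finite C \<longrightarrow>
           (\<forall>A B. A \<subseteq> C \<and> B \<subseteq> C \<and> A \<inter> B = {} \<and>
            C - A \<in> up_sets C le1 \<and> C - B \<in> up_sets C le1 \<longrightarrow>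
            (\<exists>D\<in>bool_closure C (up_sets C le0). A \<subseteq> D \<and> D \<subseteq> C - B)))"
proof (intro conjI impI allI; elim conjE)
  fix A B assume "A \<subseteq> C" "B \<subseteq> C" "A \<inter> B = {}" "C - A \<in> up_sets C le1" "C - B \<in> up_sets C le1"
  then show "\<exists>D\<in>up_sets C le1. C - D \<in> up_sets C le1 \<and> A \<subseteq> D \<and> D \<subseteq> C - B"
    by (rule compatible_two_preorder_separation[OF assms])
next
  fix A B assume fin: "finite C" and AB: "A \<subseteq> C" "B \<subseteq> C" "A \<inter> B = {}"
    "C - A \<in> up_sets C le1" "C - B \<in> up_sets C le1"
  obtain D where D: "D \<in> up_sets C le1" "C - D \<in> up_sets C le1" "A \<subseteq> D" "D \<subseteq> C - B"
    using compatible_two_preorder_separation[OF assms AB] by blast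
  have pre0: "preorder_on_set C le0"
    using assms unfolding compatible_two_preorder_def two_preorder_def by blast
  have "D \<in> bool_closure C (up_sets C le0)"
  proof (rule saturated_in_bool_closure[OF pre0 fin])
    show "D \<subseteq> C" using D(4) by blast
  qed (rule up_sets_with_compl_saturated[OF assms D(1,2)])
  then show "\<exists>D\<in>bool_closure C (up_sets C le0). A \<subseteq> D \<and> D \<subseteq> C - B"
    using D(3,4) by blast
qed

end
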